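(* Assume (A-J) and let $f\in C^{0,1}_{\mathrm{loc}}(\mathbb{R})$. Let $t_0<t_1$ and let $u_1,u_2$ be bounded measurable functions on $[t_0,t_1]\times\Omega$ such that, for $i\in\{1,2\}$: $u_i(t,\cdot),\partial_tu_i(t,\cdot)\in C(\Omega)$ for all $t\in(t_0,t_1]$ and $u_i(t_0,\cdot)\in C(\Omega)$; $u_i(\cdot,x)\in C([t_0,t_1])\cap C^1((t_0,t_1])$ for all $x\in\Omega$; and $\sup_{(t,x)\in(t_0,t_1]\times\Omega}|\partial_tu_i(t,x)|<\infty$. Suppose $$\partial_tu_1-Lu_1-f(u_1)\ge\partial_tu_2-Lu_2-f(u_2)\ \text{in }(t_0,t_1]\times\Omega,\qquad u_1(t_0,\cdot)\ge u_2(t_0,\cdot)\ \text{in }\Omega.$$ Then $u_1(t,x)\ge u_2(t,x)$ for all $(t,x)\in[t_0,t_1]\times\Omega$.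
   Context: $K\subset\mathbb{R}^N$ is compact and $\Omega:=\mathbb{R}^N\setminus K$ is connected. A distance $\delta$ on $E\subset\mathbb{R}^N$ is quasi-Euclidean if $\delta(x,y)=|x-y|$ whenever $[x,y]\subset E$ and $\delta(x,y)\ge|x-y|$ for all $x,y\in E$; $\delta$ is a quasi-Euclidean distance on $\overline\Omega$. For measurable $J:[0,\infty)\to[0,\infty)$ with $|\mathrm{supp}(J)|>0$ and $x\in\overline\Omega$, $\Pi_0(J,x)=\{x\}$, $\Pi_{j+1}(J,x)=\bigcup_{z\in\Pi_j(J,x)}\mathrm{supp}(J(\delta(\cdot,z)))$; $(\Omega,\delta)$ has the $J$-covering property if $\overline\Omega=\bigcup_j\Pi_j(J,x)$ for all $x\in\overline\Omega$. Notation: $J_{\mathrm{rad}}(z)=J(|z|)$, $\mathcal{J}^\delta(x)=\int_\Omega J(\delta(x,z))dz$, $Lu(x)=\int_\Omega J(\delta(x,y))(u(y)-u(x))dy$. (A-J): $J:[0,\infty)\to[0,\infty)$ measurable, compactly supported, $|\mathrm{supp}J|>0$; $(\Omega,\delta)$ has the $J$-covering property; $\int_{\mathbb{R}^N}J_{\mathrm{rad}}=1$; for every $y\in\overline\Omega$, $\|J(\delta(y,\cdot))-J(\delta(z,\cdot))\|_{L^1(\Omega)}\to0$ as $z\to y$; $\mathcal{J}^\delta\in L^\infty(\Omega)$. *)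

theory Defs
  imports "HOL-Analysis.Analysis"
begin

definition is_distance_on :: "'a set \<Rightarrow> ('a \<Rightarrow> 'a \<Rightarrow> real) \<Rightarrow> bool" where
  "is_distance_on E d \<longleftrightarrow>
     (\<forall>x\<in>E. \<forall>y\<in>E. 0 \<le> d x y \<and> (d x y = 0 \<longleftrightarrow> x = y) \<and> d x y = d y x) \<and>
     (\<forall>x\<in>E. \<forall>y\<in>E. \<forall>z\<in>E. d x z \<le> d x y + d y z)"

definition quasi_euclidean :: "('a::euclidean_space) set \<Rightarrow> ('a \<Rightarrow> 'a \<Rightarrow> real) \<Rightarrow> bool" where
  "quasi_euclidean E d \<longleftrightarrow> is_distance_on E d \<and>
     (\<forall>x\<in>E. \<forall>y\<in>E. closed_segment x y \<subseteq> E \<longrightarrow> d x y = dist x y) \<and>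
     (\<forall>x\<in>E. \<forall>y\<in>E. d x y \<ge> dist x y)"

definition supp_kernel :: "(real \<Rightarrow> real) \<Rightarrow> real set" where
  "supp_kernel J = closure {r. 0 \<le> r \<and> J r \<noteq> 0}"

definition supp_at :: "(real \<Rightarrow> real) \<Rightarrow> ('a::euclidean_space \<Rightarrow> 'a \<Rightarrow> real) \<Rightarrow> 'a set \<Rightarrow> 'a \<Rightarrow> 'a set" where
  "supp_at J d \<Omega> z = closure {y \<in> closure \<Omega>. J (d y z) \<noteq> 0}"

primrec Pi_set :: "(real \<Rightarrow> real) \<Rightarrow> ('a::euclidean_space \<Rightarrow> 'a \<Rightarrow> real) \<Rightarrow> 'a set \<Rightarrow> 'a \<Rightarrow> nat \<Rightarrow> 'a set" where
  "Pi_set J d \<Omega> x 0 = {x}"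
| "Pi_set J d \<Omega> x (Suc j) = (\<Union>z\<in>Pi_set J d \<Omega> x j. supp_at J d \<Omega> z)"

definition J_covering :: "(real \<Rightarrow> real) \<Rightarrow> ('a::euclidean_space \<Rightarrow> 'a \<Rightarrow> real) \<Rightarrow> 'a set \<Rightarrow> bool" where
  "J_covering J d \<Omega> \<longleftrightarrow> (\<forall>x\<in>closure \<Omega>. closure \<Omega> = (\<Union>j. Pi_set J d \<Omega> x j))"

definition assm_AJ :: "(real \<Rightarrow> real) \<Rightarrow> ('a::euclidean_space \<Rightarrow> 'a \<Rightarrow> real) \<Rightarrow> 'a set \<Rightarrow> bool" where
  "assm_AJ J d \<Omega> \<longleftrightarrow>
     J \<in> borel_measurable borel \<and>
     (\<forall>r\<ge>0. 0 \<le> J r) \<and>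
     compact (supp_kernel J) \<and>
     emeasure lborel (supp_kernel J) > 0 \<and>
     J_covering J d \<Omega> \<and>
     integrable lborel (\<lambda>z::'a. J (norm z)) \<and> integral\<^sup>L lborel (\<lambda>z::'a. J (norm z)) = 1 \<and>
     (\<forall>y\<in>closure \<Omega>. (\<lambda>w. J (d y w)) \<in> borel_measurable (restrict_space lebesgue \<Omega>)) \<and>
     (\<forall>y\<in>closure \<Omega>. ((\<lambda>z. \<integral>\<^sup>+ w\<in>\<Omega>. ennreal \<bar>J (d y w) - J (d z w)\<bar> \<partial>lebesgue) \<longlongrightarrow> 0)
                          (at y within closure \<Omega>)) \<and>
     (\<exists>C. AE x in lebesgue. x \<in> \<Omega> \<longrightarrow> (\<integral>\<^sup>+ z\<in>\<Omega>. ennreal (J (d x z)) \<partial>lebesgue) \<le> ennreal C)"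

definition Lop :: "(real \<Rightarrow> real) \<Rightarrow> ('a::euclidean_space \<Rightarrow> 'a \<Rightarrow> real) \<Rightarrow> 'a set \<Rightarrow> ('a \<Rightarrow> real) \<Rightarrow> 'a \<Rightarrow> real" where
  "Lop J d \<Omega> w x = (\<integral>y\<in>\<Omega>. J (d x y) * (w y - w x) \<partial>lebesgue)"

end

theory Submission
  imports Defs
begin

(* Write phi = u2 - u1. Wherever phi(t,x) > 0, the differential inequality, the bound
   int_Omega J(delta(x,y)) dy <= C and a Lipschitz constant L of f on the range of u1, u2 give
   d/dt phi(t,x) <= (C + L) * sup_Omega phi(t,.). Suppose phi(a,.) <= 0 and (C + L)(T - a) < 1.
   Applying the mean value theorem after the last time at which phi(.,x) <= 0 bounds
   M = sup of phi^+ over [a,T] x Omega by (C + L)(T - a) M, so M = 0; finitely many such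
   intervals cover [t0,t1]. The bound on int_Omega J(delta(x,y)) dy, assumed for almost every x,
   holds at every x of the open set Omega by the L1-continuity of x |-> J(delta(x,.)). *)

lemma frequently_at_if_AE_lebesgue:
  fixes x :: "'a::euclidean_space"
  assumes "AE z in lebesgue. P z"
  shows "\<exists>\<^sub>F z in at x. P z"
proof (rule ccontr)
  assume "\<not> (\<exists>\<^sub>F z in at x. P z)"
  then obtain S where S: "open S" "x \<in> S" and notP: "\<And>z. z \<in> S \<Longrightarrow> z \<noteq> x \<Longrightarrow> \<not> P z"
    unfolding not_frequently eventually_at_topological by blast
  have "S \<noteq> {x}" using S not_open_singleton by metis
  then obtain y where y: "y \<in> S - {x}" using S by blast
  have "AE z \<in> S - {x} in lebesgue. z \<in> {}"
    using assms by eventually_elim (use notP in auto)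
  then show False
    using mem_closed_if_AE_lebesgue_open[OF open_Diff[OF S(1) closed_singleton] closed_empty _ y] by blast
qed

lemma ennreal_le_plus_abs_diff: "ennreal a \<le> ennreal b + ennreal \<bar>a - b\<bar>"
proof (cases "0 \<le> b")
  case True
  have "ennreal a \<le> ennreal (b + \<bar>a - b\<bar>)" by (intro ennreal_leI) linarith
  also have "\<dots> = ennreal b + ennreal \<bar>a - b\<bar>" using True by (rule ennreal_plus) simp
  finally show ?thesis .
next
  case False
  have "ennreal a \<le> ennreal \<bar>a - b\<bar>" using False by (intro ennreal_leI) linarith
  also have "\<dots> \<le> ennreal b + ennreal \<bar>a - b\<bar>" by (rule add_increasing) simp_all
  finally show ?thesis .
qed

lemma nn_integral_le_if_AE_le_and_L1_continuous:
  fixes g :: "'a::euclidean_space \<Rightarrow> 'a \<Rightarrow> real" and C :: ennreal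
  assumes \<Omega>: "open \<Omega>" and x: "x \<in> \<Omega>"
    and meas: "\<And>z. z \<in> \<Omega> \<Longrightarrow> g z \<in> borel_measurable (lebesgue_on \<Omega>)"
    and L1: "((\<lambda>z. \<integral>\<^sup>+ w\<in>\<Omega>. ennreal \<bar>g x w - g z w\<bar> \<partial>lebesgue) \<longlongrightarrow> 0) (at x within \<Omega>)"
    and AE: "AE z in lebesgue. z \<in> \<Omega> \<longrightarrow> (\<integral>\<^sup>+ w\<in>\<Omega>. ennreal (g z w) \<partial>lebesgue) \<le> C"
  shows "(\<integral>\<^sup>+ w\<in>\<Omega>. ennreal (g x w) \<partial>lebesgue) \<le> C"
proof (rule ennreal_le_epsilon)
  fix e :: real assume "0 < e"
  have restrict: "(\<integral>\<^sup>+ w\<in>\<Omega>. h w \<partial>lebesgue) = (\<integral>\<^sup>+ w. h w \<partial>lebesgue_on \<Omega>)" for h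
    using \<Omega> by (simp add: nn_integral_restrict_space)
  have "\<forall>\<^sub>F z in at x. z \<in> \<Omega> \<and> (\<integral>\<^sup>+ w\<in>\<Omega>. ennreal \<bar>g x w - g z w\<bar> \<partial>lebesgue) < e"
    using order_tendstoD(2)[OF L1, of e] \<open>0 < e\<close> eventually_at_in_open'[OF \<Omega> x]
    by (auto simp: at_within_open[OF x \<Omega>] elim: eventually_elim2)
  then have "\<exists>\<^sub>F z in at x. (z \<in> \<Omega> \<and> (\<integral>\<^sup>+ w\<in>\<Omega>. ennreal \<bar>g x w - g z w\<bar> \<partial>lebesgue) < e)
      \<and> (z \<in> \<Omega> \<longrightarrow> (\<integral>\<^sup>+ w\<in>\<Omega>. ennreal (g z w) \<partial>lebesgue) \<le> C)"
    by (rule frequently_eventually_conj[OF frequently_at_if_AE_lebesgue[OF AE]])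
  then obtain z where z: "z \<in> \<Omega>" and close: "(\<integral>\<^sup>+ w\<in>\<Omega>. ennreal \<bar>g x w - g z w\<bar> \<partial>lebesgue) < e"
    and bound: "(\<integral>\<^sup>+ w\<in>\<Omega>. ennreal (g z w) \<partial>lebesgue) \<le> C"
    by (auto elim: frequentlyE)
  have [measurable]: "g x \<in> borel_measurable (lebesgue_on \<Omega>)" "g z \<in> borel_measurable (lebesgue_on \<Omega>)"
    using meas x z by auto
  have "(\<integral>\<^sup>+ w\<in>\<Omega>. ennreal (g x w) \<partial>lebesgue)
      \<le> (\<integral>\<^sup>+ w. ennreal (g z w) + ennreal \<bar>g x w - g z w\<bar> \<partial>lebesgue_on \<Omega>)"
    unfolding restrict by (intro nn_integral_mono ennreal_le_plus_abs_diff)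
  also have "\<dots> = (\<integral>\<^sup>+ w\<in>\<Omega>. ennreal (g z w) \<partial>lebesgue) + (\<integral>\<^sup>+ w\<in>\<Omega>. ennreal \<bar>g x w - g z w\<bar> \<partial>lebesgue)"
    unfolding restrict by (intro nn_integral_add) measurable
  also have "\<dots> \<le> C + e"
    using bound close by (intro add_mono) auto
  finally show "(\<integral>\<^sup>+ w\<in>\<Omega>. ennreal (g x w) \<partial>lebesgue) \<le> C + e" .
qed

lemma assm_AJ_kernel_nonneg:
  assumes "quasi_euclidean (closure \<Omega>) \<delta>" and "assm_AJ J \<delta> \<Omega>"
    and "x \<in> closure \<Omega>" and "y \<in> closure \<Omega>"
  shows "0 \<le> J (\<delta> x y)"
  using assms unfolding assm_AJ_def quasi_euclidean_def is_distance_on_def by blast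

lemma assm_AJ_kernel_integral_bounded:
  fixes \<Omega> :: "'a::euclidean_space set"
  assumes qe: "quasi_euclidean (closure \<Omega>) \<delta>" and AJ: "assm_AJ J \<delta> \<Omega>" and \<Omega>: "open \<Omega>"
  obtains C where "0 \<le> C"
    and "\<And>x. x \<in> \<Omega> \<Longrightarrow> integrable (lebesgue_on \<Omega>) (\<lambda>y. J (\<delta> x y))"
    and "\<And>x. x \<in> \<Omega> \<Longrightarrow> (\<integral>y. J (\<delta> x y) \<partial>lebesgue_on \<Omega>) \<le> C"
proof -
  obtain C0 where C0: "AE x in lebesgue. x \<in> \<Omega> \<longrightarrow> (\<integral>\<^sup>+ y\<in>\<Omega>. ennreal (J (\<delta> x y)) \<partial>lebesgue) \<le> ennreal C0"
    using AJ unfolding assm_AJ_def by blast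
  define C where "C = max C0 0"
  have meas: "(\<lambda>y. J (\<delta> x y)) \<in> borel_measurable (lebesgue_on \<Omega>)" if "x \<in> \<Omega>" for x
    using AJ that closure_subset unfolding assm_AJ_def by blast
  have nonneg: "AE y in lebesgue_on \<Omega>. 0 \<le> J (\<delta> x y)" if "x \<in> \<Omega>" for x
    using assm_AJ_kernel_nonneg[OF qe AJ] that closure_subset \<Omega>
    by (intro AE_I2) (auto simp: space_restrict_space)
  have bound: "(\<integral>\<^sup>+ y. ennreal (J (\<delta> x y)) \<partial>lebesgue_on \<Omega>) \<le> ennreal C" if x: "x \<in> \<Omega>" for x
  proof -
    have "(\<integral>\<^sup>+ y\<in>\<Omega>. ennreal (J (\<delta> x y)) \<partial>lebesgue) \<le> ennreal C"
    proof (rule nn_integral_le_if_AE_le_and_L1_continuous[where g = "\<lambda>x y. J (\<delta> x y)", OF \<Omega> x meas])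
      show "((\<lambda>z. \<integral>\<^sup>+ y\<in>\<Omega>. ennreal \<bar>J (\<delta> x y) - J (\<delta> z y)\<bar> \<partial>lebesgue) \<longlongrightarrow> 0) (at x within \<Omega>)"
        using AJ x closure_subset unfolding assm_AJ_def by (blast intro: tendsto_within_subset)
      show "AE z in lebesgue. z \<in> \<Omega> \<longrightarrow> (\<integral>\<^sup>+ y\<in>\<Omega>. ennreal (J (\<delta> z y)) \<partial>lebesgue) \<le> ennreal C"
        using C0 by eventually_elim (auto simp: C_def intro: order_trans ennreal_leI)
    qed
    then show ?thesis using \<Omega> by (simp add: nn_integral_restrict_space)
  qed
  show ?thesis
  proof
    show "0 \<le> C" by (simp add: C_def)
    show int: "integrable (lebesgue_on \<Omega>) (\<lambda>y. J (\<delta> x y))" if "x \<in> \<Omega>" for x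
      using meas[OF that] nonneg[OF that] bound[OF that]
      by (intro integrableI_nonneg) (auto simp: top_unique intro: le_less_trans)
    show "(\<integral>y. J (\<delta> x y) \<partial>lebesgue_on \<Omega>) \<le> C" if "x \<in> \<Omega>" for x
      using bound[OF that] nn_integral_eq_integral[OF int[OF that] nonneg[OF that]] \<open>0 \<le> C\<close>
      by (simp add: ennreal_le_iff)
  qed
qed

lemma Lop_eq_integral_lebesgue_on:
  assumes "\<Omega> \<in> sets lebesgue"
  shows "Lop J \<delta> \<Omega> w x = (\<integral>y. J (\<delta> x y) * (w y - w x) \<partial>lebesgue_on \<Omega>)"
  using assms unfolding Lop_def set_lebesgue_integral_def by (simp add: integral_restrict_space)

lemma Lop_diff_le:
  fixes w1 w2 :: "'a::euclidean_space \<Rightarrow> real"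
  assumes \<Omega>: "\<Omega> \<in> sets lebesgue" and x: "x \<in> \<Omega>"
    and int: "integrable (lebesgue_on \<Omega>) (\<lambda>y. J (\<delta> x y))"
    and nonneg: "\<And>y. y \<in> \<Omega> \<Longrightarrow> 0 \<le> J (\<delta> x y)"
    and le_C: "(\<integral>y. J (\<delta> x y) \<partial>lebesgue_on \<Omega>) \<le> C"
    and meas: "w1 \<in> borel_measurable (lebesgue_on \<Omega>)" "w2 \<in> borel_measurable (lebesgue_on \<Omega>)"
    and bdd: "\<And>y. y \<in> \<Omega> \<Longrightarrow> \<bar>w1 y\<bar> \<le> B" "\<And>y. y \<in> \<Omega> \<Longrightarrow> \<bar>w2 y\<bar> \<le> B"
    and le_m: "\<And>y. y \<in> \<Omega> \<Longrightarrow> w2 y - w1 y \<le> m" and le_x: "w1 x \<le> w2 x"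
  shows "Lop J \<delta> \<Omega> w2 x - Lop J \<delta> \<Omega> w1 x \<le> C * m"
proof -
  let ?N = "lebesgue_on \<Omega>"
  have int_w: "integrable ?N (\<lambda>y. J (\<delta> x y) * (w y - w x))"
    if [measurable]: "w \<in> borel_measurable ?N" and w: "\<And>y. y \<in> \<Omega> \<Longrightarrow> \<bar>w y\<bar> \<le> B" for w
  proof (rule Bochner_Integration.integrable_bound[OF integrable_mult_right[OF int, of "2 * B"]])
    have [measurable]: "(\<lambda>y. J (\<delta> x y)) \<in> borel_measurable ?N" using int by blast
    show "(\<lambda>y. J (\<delta> x y) * (w y - w x)) \<in> borel_measurable ?N" by measurable
    have "\<bar>J (\<delta> x y) * (w y - w x)\<bar> \<le> \<bar>2 * B * J (\<delta> x y)\<bar>" if "y \<in> \<Omega>" for y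
      using nonneg[OF that] w[OF that] w[OF x] by (simp add: abs_mult mult_left_mono mult.commute)
    then show "AE y in ?N. norm (J (\<delta> x y) * (w y - w x)) \<le> norm (2 * B * J (\<delta> x y))"
      using \<Omega> by (intro AE_I2) (auto simp: space_restrict_space)
  qed
  have "0 \<le> m" using le_m[OF x] le_x by linarith
  have "Lop J \<delta> \<Omega> w2 x - Lop J \<delta> \<Omega> w1 x
      = (\<integral>y. J (\<delta> x y) * (w2 y - w2 x) - J (\<delta> x y) * (w1 y - w1 x) \<partial>?N)"
    unfolding Lop_eq_integral_lebesgue_on[OF \<Omega>] using int_w[OF meas(1) bdd(1)] int_w[OF meas(2) bdd(2)] by simp
  also have "\<dots> \<le> (\<integral>y. m * J (\<delta> x y) \<partial>?N)"
  proof (rule integral_mono)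
    show "integrable ?N (\<lambda>y. J (\<delta> x y) * (w2 y - w2 x) - J (\<delta> x y) * (w1 y - w1 x))"
      using int_w[OF meas(1) bdd(1)] int_w[OF meas(2) bdd(2)] by simp
    show "integrable ?N (\<lambda>y. m * J (\<delta> x y))" using int by simp
    fix y assume "y \<in> space ?N"
    then have "y \<in> \<Omega>" using \<Omega> by (simp add: space_restrict_space)
    have "J (\<delta> x y) * (w2 y - w2 x) - J (\<delta> x y) * (w1 y - w1 x) = J (\<delta> x y) * ((w2 y - w1 y) - (w2 x - w1 x))"
      by (simp add: algebra_simps)
    also have "\<dots> \<le> J (\<delta> x y) * m"
      using nonneg[OF \<open>y \<in> \<Omega>\<close>] le_m[OF \<open>y \<in> \<Omega>\<close>] le_x by (intro mult_left_mono) auto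
    finally show "J (\<delta> x y) * (w2 y - w2 x) - J (\<delta> x y) * (w1 y - w1 x) \<le> m * J (\<delta> x y)"
      by (simp add: mult.commute)
  qed
  also have "\<dots> \<le> C * m"
    using mult_left_mono[OF le_C \<open>0 \<le> m\<close>] by (simp add: mult.commute)
  finally show ?thesis .
qed

lemma MVT_after_last_nonpos:
  fixes g g' :: "real \<Rightarrow> real"
  assumes "a \<le> t" and cont: "continuous_on {a..t} g"
    and deriv: "\<And>\<xi>. a < \<xi> \<Longrightarrow> \<xi> < t \<Longrightarrow> (g has_real_derivative g' \<xi>) (at \<xi>)"
    and "g a \<le> 0" and "0 < g t"
  obtains s \<xi> where "a \<le> s" "s < \<xi>" "\<xi> < t" "0 < g \<xi>" "g t \<le> (t - s) * g' \<xi>"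
proof -
  define Z where "Z = {a..t} \<inter> g -` {..0}"
  have "closed Z" unfolding Z_def using cont by (rule continuous_closed_preimage) auto
  moreover have "a \<in> Z" and bdd: "bdd_above Z" using assms unfolding Z_def by auto
  ultimately have "Sup Z \<in> Z" using closed_contains_Sup by blast
  define s where "s = Sup Z"
  have "a \<le> s" "s \<le> t" "g s \<le> 0" using \<open>Sup Z \<in> Z\<close> unfolding s_def Z_def by auto
  with \<open>0 < g t\<close> have "s < t" by (cases "s = t") auto
  have pos: "0 < g \<xi>" if "s < \<xi>" "\<xi> \<le> t" for \<xi>
  proof (rule ccontr)
    assume "\<not> 0 < g \<xi>"
    then have "\<xi> \<in> Z" unfolding Z_def using that \<open>a \<le> s\<close> by auto
    then show False using cSup_upper[OF _ bdd] that unfolding s_def by fastforce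
  qed
  obtain \<xi> where \<xi>: "s < \<xi>" "\<xi> < t" and mvt: "g t - g s = g' \<xi> * (t - s)"
  proof (rule mvt[OF \<open>s < t\<close>])
    show "continuous_on {s..t} g" using \<open>a \<le> s\<close> by (intro continuous_on_subset[OF cont]) auto
    show "(g has_derivative (*) (g' \<xi>)) (at \<xi>)" if "s < \<xi>" "\<xi> < t" for \<xi>
      using deriv[of \<xi>] that \<open>a \<le> s\<close> unfolding has_field_derivative_def by simp
  qed
  have "g t \<le> (t - s) * g' \<xi>" using mvt \<open>g s \<le> 0\<close> by (simp add: algebra_simps)
  with \<xi> pos \<open>a \<le> s\<close> show ?thesis by (intro that[of s \<xi>]) auto
qed

lemma nonpos_if_deriv_le_sup_short:
  fixes \<phi> d :: "real \<Rightarrow> 'a \<Rightarrow> real"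
  assumes "a \<le> T" and "0 \<le> A" and short: "A * (T - a) < 1"
    and cont: "\<And>x. x \<in> X \<Longrightarrow> continuous_on {a..T} (\<lambda>t. \<phi> t x)"
    and deriv: "\<And>t x. t \<in> {a<..<T} \<Longrightarrow> x \<in> X \<Longrightarrow> ((\<lambda>t. \<phi> t x) has_real_derivative d t x) (at t)"
    and bdd: "bdd_above ((\<lambda>(t, x). \<phi> t x) ` ({a..T} \<times> X))"
    and init: "\<And>x. x \<in> X \<Longrightarrow> \<phi> a x \<le> 0"
    and rate: "\<And>t x m. t \<in> {a<..<T} \<Longrightarrow> x \<in> X \<Longrightarrow> 0 < \<phi> t x \<Longrightarrow> \<forall>y\<in>X. \<phi> t y \<le> m \<Longrightarrow> d t x \<le> A * m"
    and "t \<in> {a..T}" and "x \<in> X"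
  shows "\<phi> t x \<le> 0"
proof -
  define M where "M = Sup (insert 0 ((\<lambda>(t, x). \<phi> t x) ` ({a..T} \<times> X)))"
  have bdd': "bdd_above (insert 0 ((\<lambda>(t, x). \<phi> t x) ` ({a..T} \<times> X)))" using bdd by simp
  have "0 \<le> M" unfolding M_def using bdd' by (rule cSup_upper[rotated]) simp
  have le_M: "\<phi> t x \<le> M" if "t \<in> {a..T}" "x \<in> X" for t x
    unfolding M_def using bdd' by (rule cSup_upper[rotated]) (use that in force)
  have growth: "\<phi> t x \<le> A * (T - a) * M" if t: "t \<in> {a..T}" and x: "x \<in> X" for t x
  proof (cases "\<phi> t x \<le> 0")
    case True
    moreover have "0 \<le> A * (T - a) * M" using \<open>0 \<le> A\<close> \<open>0 \<le> M\<close> t by simp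
    ultimately show ?thesis by linarith
  next
    case False
    obtain s \<xi> where s: "a \<le> s" "s < \<xi>" "\<xi> < t" and "0 < \<phi> \<xi> x"
      and mvt: "\<phi> t x \<le> (t - s) * d \<xi> x"
    proof (rule MVT_after_last_nonpos[where g = "\<lambda>t. \<phi> t x" and g' = "\<lambda>\<xi>. d \<xi> x"])
      show "continuous_on {a..t} (\<lambda>t. \<phi> t x)" using t by (intro continuous_on_subset[OF cont[OF x]]) auto
    qed (use t x False init deriv in auto)
    have "d \<xi> x \<le> A * M" using rate[of \<xi> x M] s t x \<open>0 < \<phi> \<xi> x\<close> le_M by auto
    then have "\<phi> t x \<le> (t - s) * (A * M)" using mvt s mult_left_mono[of "d \<xi> x" "A * M" "t - s"] by linarith
    also have "\<dots> \<le> (T - a) * (A * M)" using s t \<open>0 \<le> A\<close> \<open>0 \<le> M\<close> by (intro mult_right_mono) auto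
    finally show ?thesis by (simp add: algebra_simps)
  qed
  have "M \<le> A * (T - a) * M"
    using growth \<open>0 \<le> A\<close> \<open>0 \<le> M\<close> \<open>a \<le> T\<close> unfolding M_def by (intro cSup_least) auto
  then have "(1 - A * (T - a)) * M \<le> 0" by (simp add: algebra_simps)
  with short have "M \<le> 0" by (simp add: mult_le_0_iff)
  then show ?thesis using le_M[OF \<open>t \<in> {a..T}\<close> \<open>x \<in> X\<close>] by linarith
qed

lemma nonpos_if_deriv_le_sup:
  fixes \<phi> d :: "real \<Rightarrow> 'a \<Rightarrow> real"
  assumes "0 \<le> A"
    and cont: "\<And>x. x \<in> X \<Longrightarrow> continuous_on {t0..t1} (\<lambda>t. \<phi> t x)"
    and deriv: "\<And>t x. t \<in> {t0<..<t1} \<Longrightarrow> x \<in> X \<Longrightarrow> ((\<lambda>t. \<phi> t x) has_real_derivative d t x) (at t)"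
    and bdd: "bdd_above ((\<lambda>(t, x). \<phi> t x) ` ({t0..t1} \<times> X))"
    and init: "\<And>x. x \<in> X \<Longrightarrow> \<phi> t0 x \<le> 0"
    and rate: "\<And>t x m. t \<in> {t0<..<t1} \<Longrightarrow> x \<in> X \<Longrightarrow> 0 < \<phi> t x \<Longrightarrow> \<forall>y\<in>X. \<phi> t y \<le> m \<Longrightarrow> d t x \<le> A * m"
    and t: "t \<in> {t0..t1}" and x: "x \<in> X"
  shows "\<phi> t x \<le> 0"
proof -
  define h where "h = 1 / (A + 1)"
  have "0 < h" and "A * h < 1" using \<open>0 \<le> A\<close> by (auto simp: h_def field_simps)
  have steps: "\<forall>t\<in>{t0..min t1 (t0 + real n * h)}. \<forall>x\<in>X. \<phi> t x \<le> 0" for n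
  proof (induction n)
    case 0
    then show ?case using init by auto
  next
    case (Suc n)
    define a where "a = min t1 (t0 + real n * h)"
    define T where "T = min t1 (t0 + real (Suc n) * h)"
    show ?case unfolding T_def[symmetric]
    proof (intro ballI)
      fix t x assume t: "t \<in> {t0..T}" and x: "x \<in> X"
      show "\<phi> t x \<le> 0"
      proof (cases "t \<le> a")
        case True
        then show ?thesis using Suc.IH t x unfolding a_def T_def by auto
      next
        case False
        have "t0 \<le> a" "a \<le> T" "T \<le> t1" "T - a \<le> h"
          using t False \<open>0 < h\<close> by (auto simp: a_def T_def algebra_simps)
        have "A * (T - a) < 1"
          using \<open>A * h < 1\<close> mult_left_mono[OF \<open>T - a \<le> h\<close> \<open>0 \<le> A\<close>] by linarith
        have "{a..T} \<subseteq> {t0..t1}" and "{a<..<T} \<subseteq> {t0<..<t1}"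
          using \<open>t0 \<le> a\<close> \<open>T \<le> t1\<close> by auto
        show ?thesis
        proof (rule nonpos_if_deriv_le_sup_short[where a = a and T = T and \<phi> = \<phi> and d = d and X = X])
          show "continuous_on {a..T} (\<lambda>t. \<phi> t x)" if "x \<in> X" for x
            by (rule continuous_on_subset[OF cont[OF that] \<open>{a..T} \<subseteq> {t0..t1}\<close>])
          show "bdd_above ((\<lambda>(t, x). \<phi> t x) ` ({a..T} \<times> X))"
            using \<open>{a..T} \<subseteq> {t0..t1}\<close> by (intro bdd_above_mono[OF bdd] image_mono) auto
          show "\<phi> a x \<le> 0" if "x \<in> X" for x
            using Suc.IH that \<open>t0 \<le> a\<close> unfolding a_def by auto
          show "((\<lambda>t. \<phi> t x) has_real_derivative d t x) (at t)" if "t \<in> {a<..<T}" "x \<in> X" for t x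
            using deriv that \<open>{a<..<T} \<subseteq> {t0<..<t1}\<close> by blast
          show "d t x \<le> A * m"
            if "t \<in> {a<..<T}" "x \<in> X" "0 < \<phi> t x" "\<forall>y\<in>X. \<phi> t y \<le> m" for t x m
            using rate that \<open>{a<..<T} \<subseteq> {t0<..<t1}\<close> by blast
        qed (use \<open>a \<le> T\<close> \<open>0 \<le> A\<close> \<open>A * (T - a) < 1\<close> t x False in auto)
      qed
    qed
  qed
  obtain n :: nat where "(t1 - t0) / h < real n" using reals_Archimedean2 by blast
  then have "t1 \<le> t0 + real n * h" using \<open>0 < h\<close> by (simp add: field_simps)
  then show ?thesis using steps[of n] t x by auto
qed

lemma assm_AJ_Lop_lipschitz_diff_le:
  fixes \<Omega> :: "'a::euclidean_space set"
  assumes qe: "quasi_euclidean (closure \<Omega>) \<delta>" and AJ: "assm_AJ J \<delta> \<Omega>" and \<Omega>: "open \<Omega>"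
    and f: "L-lipschitz_on {-B..B} f"
  obtains A where "0 \<le> A"
    and "\<And>w1 w2 x m. x \<in> \<Omega> \<Longrightarrow> continuous_on \<Omega> w1 \<Longrightarrow> continuous_on \<Omega> w2 \<Longrightarrow>
      \<forall>y\<in>\<Omega>. \<bar>w1 y\<bar> \<le> B \<and> \<bar>w2 y\<bar> \<le> B \<Longrightarrow> \<forall>y\<in>\<Omega>. w2 y - w1 y \<le> m \<Longrightarrow> w1 x \<le> w2 x \<Longrightarrow>
      (Lop J \<delta> \<Omega> w2 x + f (w2 x)) - (Lop J \<delta> \<Omega> w1 x + f (w1 x)) \<le> A * m"
proof -
  have \<Omega>_sets: "\<Omega> \<in> sets lebesgue" using \<Omega> by simp
  obtain C where "0 \<le> C" and kernel_int: "\<And>x. x \<in> \<Omega> \<Longrightarrow> integrable (lebesgue_on \<Omega>) (\<lambda>y. J (\<delta> x y))"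
    and kernel_le: "\<And>x. x \<in> \<Omega> \<Longrightarrow> (\<integral>y. J (\<delta> x y) \<partial>lebesgue_on \<Omega>) \<le> C"
    using assm_AJ_kernel_integral_bounded[OF qe AJ \<Omega>] by blast
  show ?thesis
  proof
    show "0 \<le> C + L" using \<open>0 \<le> C\<close> lipschitz_on_nonneg[OF f] by simp
    fix w1 w2 :: "'a \<Rightarrow> real" and x m
    assume x: "x \<in> \<Omega>" and cont: "continuous_on \<Omega> w1" "continuous_on \<Omega> w2"
      and bdd: "\<forall>y\<in>\<Omega>. \<bar>w1 y\<bar> \<le> B \<and> \<bar>w2 y\<bar> \<le> B"
      and le_m: "\<forall>y\<in>\<Omega>. w2 y - w1 y \<le> m" and le_x: "w1 x \<le> w2 x"
    have "Lop J \<delta> \<Omega> w2 x - Lop J \<delta> \<Omega> w1 x \<le> C * m"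
    proof (rule Lop_diff_le[where J = J and \<delta> = \<delta>, OF \<Omega>_sets x kernel_int[OF x] _ kernel_le[OF x]])
      show "0 \<le> J (\<delta> x y)" if "y \<in> \<Omega>" for y
        using assm_AJ_kernel_nonneg[OF qe AJ] x that closure_subset by blast
      show "w1 \<in> borel_measurable (lebesgue_on \<Omega>)" "w2 \<in> borel_measurable (lebesgue_on \<Omega>)"
        using cont by (auto intro: continuous_imp_measurable_on_sets_lebesgue[OF _ \<Omega>_sets])
    qed (use bdd le_m le_x in auto)
    moreover have "f (w2 x) - f (w1 x) \<le> L * m"
    proof -
      have "dist (f (w2 x)) (f (w1 x)) \<le> L * dist (w2 x) (w1 x)"
        using bdd x by (intro lipschitz_onD[OF f]) auto
      also have "\<dots> \<le> L * m"
        using le_m x le_x lipschitz_on_nonneg[OF f] by (intro mult_left_mono) (auto simp: dist_real_def)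
      finally show ?thesis by (simp add: dist_real_def)
    qed
    ultimately show "(Lop J \<delta> \<Omega> w2 x + f (w2 x)) - (Lop J \<delta> \<Omega> w1 x + f (w1 x)) \<le> (C + L) * m"
      by (simp add: distrib_right)
  qed
qed

theorem lemma3p1:
  fixes K :: "'a::euclidean_space set" and \<Omega> :: "'a set"
    and \<delta> :: "'a \<Rightarrow> 'a \<Rightarrow> real" and J :: "real \<Rightarrow> real" and f :: "real \<Rightarrow> real"
    and t0 t1 :: real and u1 u2 v1 v2 :: "real \<Rightarrow> 'a \<Rightarrow> real"
  assumes K: "compact K" and \<Omega>_def: "\<Omega> = UNIV - K" and conn: "connected \<Omega>"
    and qe: "quasi_euclidean (closure \<Omega>) \<delta>"
    and AJ: "assm_AJ J \<delta> \<Omega>"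
    and f_lip: "\<forall>S. compact S \<longrightarrow> (\<exists>C. C-lipschitz_on S f)"
    and t01: "t0 < t1"
    and meas1: "(\<lambda>p. u1 (fst p) (snd p)) \<in> borel_measurable (restrict_space (lborel \<Otimes>\<^sub>M lborel) ({t0..t1} \<times> \<Omega>))"
    and meas2: "(\<lambda>p. u2 (fst p) (snd p)) \<in> borel_measurable (restrict_space (lborel \<Otimes>\<^sub>M lborel) ({t0..t1} \<times> \<Omega>))"
    and bdd1: "\<exists>M. \<forall>t\<in>{t0..t1}. \<forall>x\<in>\<Omega>. \<bar>u1 t x\<bar> \<le> M"
    and bdd2: "\<exists>M. \<forall>t\<in>{t0..t1}. \<forall>x\<in>\<Omega>. \<bar>u2 t x\<bar> \<le> M"
    and cx1: "\<forall>t\<in>{t0<..t1}. continuous_on \<Omega> (u1 t) \<and> continuous_on \<Omega> (v1 t)"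
    and cx2: "\<forall>t\<in>{t0<..t1}. continuous_on \<Omega> (u2 t) \<and> continuous_on \<Omega> (v2 t)"
    and c01: "continuous_on \<Omega> (u1 t0)" and c02: "continuous_on \<Omega> (u2 t0)"
    and ct1: "\<forall>x\<in>\<Omega>. continuous_on {t0..t1} (\<lambda>t. u1 t x) \<and> continuous_on {t0<..t1} (\<lambda>t. v1 t x)
               \<and> (\<forall>t\<in>{t0<..t1}. ((\<lambda>s. u1 s x) has_real_derivative v1 t x) (at t within {t0<..t1}))"
    and ct2: "\<forall>x\<in>\<Omega>. continuous_on {t0..t1} (\<lambda>t. u2 t x) \<and> continuous_on {t0<..t1} (\<lambda>t. v2 t x)
               \<and> (\<forall>t\<in>{t0<..t1}. ((\<lambda>s. u2 s x) has_real_derivative v2 t x) (at t within {t0<..t1}))"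
    and dbdd1: "\<exists>M. \<forall>t\<in>{t0<..t1}. \<forall>x\<in>\<Omega>. \<bar>v1 t x\<bar> \<le> M"
    and dbdd2: "\<exists>M. \<forall>t\<in>{t0<..t1}. \<forall>x\<in>\<Omega>. \<bar>v2 t x\<bar> \<le> M"
    and ineq: "\<forall>t\<in>{t0<..t1}. \<forall>x\<in>\<Omega>.
                 v1 t x - Lop J \<delta> \<Omega> (u1 t) x - f (u1 t x) \<ge> v2 t x - Lop J \<delta> \<Omega> (u2 t) x - f (u2 t x)"
    and init: "\<forall>x\<in>\<Omega>. u1 t0 x \<ge> u2 t0 x"
  shows "\<forall>t\<in>{t0..t1}. \<forall>x\<in>\<Omega>. u1 t x \<ge> u2 t x"
proof -
  have \<Omega>: "open \<Omega>" unfolding \<Omega>_def using K by (simp add: compact_imp_closed open_Diff)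
  obtain B where u_bdd: "\<And>t x. t \<in> {t0..t1} \<Longrightarrow> x \<in> \<Omega> \<Longrightarrow> \<bar>u1 t x\<bar> \<le> B \<and> \<bar>u2 t x\<bar> \<le> B"
    using bdd1 bdd2 by (metis max.cobounded1 max.cobounded2 order_trans)
  obtain L where "L-lipschitz_on {-B..B} f" using f_lip by blast
  then obtain A where "0 \<le> A" and rate: "\<And>w1 w2 x m. x \<in> \<Omega> \<Longrightarrow> continuous_on \<Omega> w1 \<Longrightarrow> continuous_on \<Omega> w2 \<Longrightarrow>
      \<forall>y\<in>\<Omega>. \<bar>w1 y\<bar> \<le> B \<and> \<bar>w2 y\<bar> \<le> B \<Longrightarrow> \<forall>y\<in>\<Omega>. w2 y - w1 y \<le> m \<Longrightarrow> w1 x \<le> w2 x \<Longrightarrow>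
      (Lop J \<delta> \<Omega> w2 x + f (w2 x)) - (Lop J \<delta> \<Omega> w1 x + f (w1 x)) \<le> A * m"
    using assm_AJ_Lop_lipschitz_diff_le[OF qe AJ \<Omega>] by blast
  have "u2 t x - u1 t x \<le> 0" if "t \<in> {t0..t1}" "x \<in> \<Omega>" for t x
  proof (rule nonpos_if_deriv_le_sup[where d = "\<lambda>t x. v2 t x - v1 t x", OF \<open>0 \<le> A\<close> _ _ _ _ _ that])
    show "continuous_on {t0..t1} (\<lambda>t. u2 t x - u1 t x)" if "x \<in> \<Omega>" for x
      using ct1 ct2 that by (intro continuous_on_diff) auto
    show "((\<lambda>t. u2 t x - u1 t x) has_real_derivative v2 t x - v1 t x) (at t)"
      if "t \<in> {t0<..<t1}" "x \<in> \<Omega>" for t x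
    proof -
      have at_t: "at t within {t0<..t1} = at t" using that by (intro at_within_interior) auto
      have "((\<lambda>s. u2 s x) has_real_derivative v2 t x) (at t within {t0<..t1})"
        and "((\<lambda>s. u1 s x) has_real_derivative v1 t x) (at t within {t0<..t1})"
        using ct1 ct2 that by auto
      then show ?thesis unfolding at_t by (rule DERIV_diff)
    qed
    show "bdd_above ((\<lambda>(t, x). u2 t x - u1 t x) ` ({t0..t1} \<times> \<Omega>))"
      using u_bdd by (intro bdd_aboveI[of _ "2 * B"]) (force simp: abs_le_iff)
    show "u2 t0 x - u1 t0 x \<le> 0" if "x \<in> \<Omega>" for x using init that by simp
    show "v2 t x - v1 t x \<le> A * m"
      if "t \<in> {t0<..<t1}" "x \<in> \<Omega>" "0 < u2 t x - u1 t x" "\<forall>y\<in>\<Omega>. u2 t y - u1 t y \<le> m" for t x m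
      using rate[of x "u1 t" "u2 t" m] ineq[rule_format, of t x] cx1 cx2 u_bdd[of t] that by auto
  qed
  then show ?thesis by auto
qed

end
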